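(* Let $s\ge0$, and let $Y\in\{-1,+1\}$ and $\lambda_{C_1},\dots,\lambda_{C_s}\in\{-1,0,+1\}$ be jointly distributed random variables. Define $2\cdot3^s\times2\cdot3^s$ matrices recursively by $$A_0=\begin{bmatrix}1&1\\1&0\end{bmatrix},\quad B_0=\begin{bmatrix}0&0\\0&1\end{bmatrix},\quad D=\begin{bmatrix}1&1&1\\1&0&0\\0&1&0\end{bmatrix},\quad E=\begin{bmatrix}0&0&0\\0&0&1\\0&0&0\end{bmatrix},$$ $$A_s=D\otimes A_{s-1}+E\otimes B_{s-1},\qquad B_s=E\otimes A_{s-1}+D\otimes B_{s-1},$$ where $\otimes$ is the Kronecker product. Index vectors of length $2\cdot3^s$ by $k=t+2\sum_{i=1}^s d_i3^{i-1}$ with $t\in\{0,1\}$ and $d_i\in\{0,1,2\}$. Let $\mu_C$ be the vector whose entry $k$ is $P(Y=y,\lambda_{C_1}=b_1,\dots,\lambda_{C_s}=b_s)$ with $y=1$ if $t=0$, $y=-1$ if $t=1$, and $b_i=1,0,-1$ according as $d_i=0,1,2$. Let $r_C$ be the vector whose entry $k$ is $P\big(\prod_{z\in Z}z=1,\ z=0\ \forall z\in U\big)$, where $Z=\{Y: t=1\}\cup\{\lambda_{C_i}:d_i=1\}$ and $U=\{\lambda_{C_i}:d_i=2\}$ (an empty product equals $1$, so the entry with $Z=U=\emptyset$ equals $1$). Then $A_s\mu_C=r_C$.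
   Context: In the intended application $\lambda_{C_1},\dots,\lambda_{C_s}$ are the outputs of a clique of weak supervision sources (value $0$ meaning abstain) and $Y$ is the task they label; $\mu_C$ is the marginal distribution (label model parameter) of the clique. *)

theory Defs
  imports "HOL-Probability.Probability"
begin

text \<open>Matrices are represented as functions nat \<Rightarrow> nat \<Rightarrow> real (entries outside the
  intended range are 0); vectors as nat \<Rightarrow> real. Indices start at 0.\<close>

definition A0 :: "nat \<Rightarrow> nat \<Rightarrow> real" where
  "A0 i j = (if i < 2 \<and> j < 2 then [[1,1],[1,0]] ! i ! j else 0)"

definition B0 :: "nat \<Rightarrow> nat \<Rightarrow> real" where
  "B0 i j = (if i < 2 \<and> j < 2 then [[0,0],[0,1]] ! i ! j else 0)"

definition Dm :: "nat \<Rightarrow> nat \<Rightarrow> real" where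
  "Dm i j = (if i < 3 \<and> j < 3 then [[1,1,1],[1,0,0],[0,1,0]] ! i ! j else 0)"

definition Em :: "nat \<Rightarrow> nat \<Rightarrow> real" where
  "Em i j = (if i < 3 \<and> j < 3 then [[0,0,0],[0,0,1],[0,0,0]] ! i ! j else 0)"

definition kron :: "nat \<Rightarrow> (nat \<Rightarrow> nat \<Rightarrow> real) \<Rightarrow> (nat \<Rightarrow> nat \<Rightarrow> real) \<Rightarrow> nat \<Rightarrow> nat \<Rightarrow> real" where
  "kron n X Y i j = X (i div n) (j div n) * Y (i mod n) (j mod n)"

definition madd :: "(nat \<Rightarrow> nat \<Rightarrow> real) \<Rightarrow> (nat \<Rightarrow> nat \<Rightarrow> real) \<Rightarrow> nat \<Rightarrow> nat \<Rightarrow> real" where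
  "madd X Y i j = X i j + Y i j"

text \<open>AB s = (A_s, B_s), both of size 2*3^s.\<close>
fun AB :: "nat \<Rightarrow> (nat \<Rightarrow> nat \<Rightarrow> real) \<times> (nat \<Rightarrow> nat \<Rightarrow> real)" where
  "AB 0 = (A0, B0)"
| "AB (Suc s) = (let (A, B) = AB s; n = 2 * 3 ^ s in
      (madd (kron n Dm A) (kron n Em B), madd (kron n Em A) (kron n Dm B)))"

definition Amat :: "nat \<Rightarrow> nat \<Rightarrow> nat \<Rightarrow> real" where
  "Amat s = fst (AB s)"

text \<open>Digits of index k = t + 2 * (\<Sum>i=1..s. d_i 3^(i-1)).\<close>
definition tdig :: "nat \<Rightarrow> nat" where
  "tdig k = k mod 2"

definition ddig :: "nat \<Rightarrow> nat \<Rightarrow> nat" where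
  "ddig k i = ((k div 2) div 3 ^ (i - 1)) mod 3"

definition ydig :: "nat \<Rightarrow> int" where
  "ydig k = (if tdig k = 0 then 1 else -1)"

definition bdig :: "nat \<Rightarrow> nat \<Rightarrow> int" where
  "bdig k i = (if ddig k i = 0 then 1 else if ddig k i = 1 then 0 else -1)"

definition mu_vec :: "'a pmf \<Rightarrow> ('a \<Rightarrow> int) \<Rightarrow> (nat \<Rightarrow> 'a \<Rightarrow> int) \<Rightarrow> nat \<Rightarrow> nat \<Rightarrow> real" where
  "mu_vec p Y lam s k = measure_pmf.prob p
     {\<omega>. Y \<omega> = ydig k \<and> (\<forall>i\<in>{1..s}. lam i \<omega> = bdig k i)}"

definition r_vec :: "'a pmf \<Rightarrow> ('a \<Rightarrow> int) \<Rightarrow> (nat \<Rightarrow> 'a \<Rightarrow> int) \<Rightarrow> nat \<Rightarrow> nat \<Rightarrow> real" where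
  "r_vec p Y lam s k = measure_pmf.prob p
     {\<omega>. (if tdig k = 1 then Y \<omega> else 1) * (\<Prod>i\<in>{i\<in>{1..s}. ddig k i = 1}. lam i \<omega>) = 1
          \<and> (\<forall>i\<in>{1..s}. ddig k i = 2 \<longrightarrow> lam i \<omega> = 0)}"

end

theory Submission
  imports Defs
begin

text \<open>The identity is proved for the probabilities restricted to an arbitrary event \<open>S\<close>,
  simultaneously for \<open>A\<^sub>s\<close> (which produces the events "product \<open>= 1\<close>") and \<open>B\<^sub>s\<close> (which
  produces "product \<open>= -1\<close>"), by induction on \<open>s\<close>. In the step, an index is a block index
  \<open>d\<close> for the new source \<open>\<lambda>\<^sub>s\<^sub>+\<^sub>1\<close> together with an index of size \<open>s\<close>, and the Kronecker
  structure reduces the claim to the induction hypothesis for the three events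
  \<open>S \<inter> {\<lambda>\<^sub>s\<^sub>+\<^sub>1 = b}\<close>, \<open>b \<in> {1, 0, -1}\<close>. Row \<open>d\<close> of \<open>D\<close> and \<open>E\<close> then encodes how the event for
  digit \<open>d\<close> decomposes along the value of \<open>\<lambda>\<^sub>s\<^sub>+\<^sub>1\<close>: no condition (\<open>d = 0\<close>) sums over all three
  values; a factor \<open>\<lambda>\<^sub>s\<^sub>+\<^sub>1\<close> in the product (\<open>d = 1\<close>) keeps the sign for \<open>\<lambda>\<^sub>s\<^sub>+\<^sub>1 = 1\<close> and flips it,
  i.e. swaps the roles of \<open>A\<close> and \<open>B\<close>, for \<open>\<lambda>\<^sub>s\<^sub>+\<^sub>1 = -1\<close>; abstention (\<open>d = 2\<close>) keeps only
  \<open>\<lambda>\<^sub>s\<^sub>+\<^sub>1 = 0\<close>.\<close>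

lemma sum_lessThan_mult_blocks:
  fixes m n :: nat
  shows "(\<Sum>j < m * n. f j) = (\<Sum>e < m. \<Sum>j < n. f (j + n * e))"
proof -
  have "(\<Sum>j < m * n. f j) = (\<Sum>e < m. sum f {e * n..<e * n + n})"
    using sum.nat_group[of f n m] by (simp add: mult.commute)
  also have "\<dots> = (\<Sum>e < m. \<Sum>j < n. f (j + n * e))"
  proof (rule sum.cong[OF refl])
    fix e
    show "sum f {e * n..<e * n + n} = (\<Sum>j < n. f (j + n * e))"
      using sum.shift_bounds_nat_ivl[of f 0 "e * n" n]
      by (simp add: lessThan_atLeast0 mult.commute add.commute)
  qed
  finally show ?thesis .
qed

lemma kron_block_entry:
  assumes "k < n" "j < n"
  shows "kron n X Z (k + n * d) (j + n * e) = X d e * Z k j"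
  using assms unfolding kron_def by simp

lemma kron_block_mult:
  fixes v :: "nat \<Rightarrow> real"
  assumes "k < n"
  shows "(\<Sum>j < m * n. madd (kron n X A) (kron n Z B) (k + n * d) j * v j)
    = (\<Sum>e < m. X d e * (\<Sum>j < n. A k j * v (j + n * e)) + Z d e * (\<Sum>j < n. B k j * v (j + n * e)))"
  using assms
  by (simp add: sum_lessThan_mult_blocks madd_def kron_block_entry sum_distrib_left
      sum.distrib distrib_right mult.assoc)

lemma AB_Suc_eq:
  "fst (AB (Suc s)) = madd (kron (2 * 3 ^ s) Dm (fst (AB s))) (kron (2 * 3 ^ s) Em (snd (AB s)))"
  "snd (AB (Suc s)) = madd (kron (2 * 3 ^ s) Em (fst (AB s))) (kron (2 * 3 ^ s) Dm (snd (AB s)))"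
  by (simp_all add: Let_def split: prod.split)

lemma sum_Dm_Em_row:
  fixes f g :: "nat \<Rightarrow> real"
  shows "(\<Sum>e < 3. Dm 0 e * f e + Em 0 e * g e) = f 0 + f 1 + f 2"
    and "(\<Sum>e < 3. Dm 1 e * f e + Em 1 e * g e) = f 0 + g 2"
    and "(\<Sum>e < 3. Dm 2 e * f e + Em 2 e * g e) = f 1"
  by (simp_all add: Dm_def Em_def numeral_3_eq_3 numeral_2_eq_2)

lemma tdig_block: "tdig (j + 2 * 3 ^ s * e) = tdig j"
  unfolding tdig_def by (simp add: mult.assoc)

lemma ddig_block_top:
  assumes "j < 2 * 3 ^ s" "e < 3"
  shows "ddig (j + 2 * 3 ^ s * e) (Suc s) = e"
proof -
  have "(j + 2 * 3 ^ s * e) div 2 = j div 2 + 3 ^ s * e" by simp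
  moreover have "j div 2 < 3 ^ s" using assms(1) by linarith
  ultimately show ?thesis unfolding ddig_def using assms(2) by simp
qed

lemma ddig_block_low:
  assumes "i \<in> {1..s}"
  shows "ddig (j + 2 * 3 ^ s * e) i = ddig j i"
proof -
  define q where "q = i - 1"
  have "(3::nat) ^ s = 3 ^ q * (3 * 3 ^ (s - q - 1))"
    using assms by (simp add: q_def flip: power_add power_Suc)
  then have "(j div 2 + 3 ^ s * e) div 3 ^ q = j div 2 div 3 ^ q + 3 * (3 ^ (s - q - 1) * e)"
    by (simp add: mult.assoc)
  moreover have "(j + 2 * 3 ^ s * e) div 2 = j div 2 + 3 ^ s * e" by simp
  ultimately show ?thesis unfolding ddig_def q_def[symmetric] by simp
qed

definition digit_vote :: "nat \<Rightarrow> int" where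
  "digit_vote e = (if e = 0 then 1 else if e = 1 then 0 else -1)"

lemma bdig_eq_digit_vote: "bdig k i = digit_vote (ddig k i)"
  unfolding bdig_def digit_vote_def ..

lemma atLeastAtMost_Suc_insert: "{1..Suc s} = insert (Suc s) {1..s}"
  by auto

definition mu_on :: "'a pmf \<Rightarrow> ('a \<Rightarrow> int) \<Rightarrow> (nat \<Rightarrow> 'a \<Rightarrow> int) \<Rightarrow> nat \<Rightarrow> 'a set \<Rightarrow> nat \<Rightarrow> real" where
  "mu_on p Y lam s S k =
     measure_pmf.prob p {\<omega>\<in>S. Y \<omega> = ydig k \<and> (\<forall>i\<in>{1..s}. lam i \<omega> = bdig k i)}"

definition sign_prod :: "('a \<Rightarrow> int) \<Rightarrow> (nat \<Rightarrow> 'a \<Rightarrow> int) \<Rightarrow> nat \<Rightarrow> nat \<Rightarrow> 'a \<Rightarrow> int" where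
  "sign_prod Y lam s k \<omega> =
     (if tdig k = 1 then Y \<omega> else 1) * (\<Prod>i\<in>{i\<in>{1..s}. ddig k i = 1}. lam i \<omega>)"

definition abstains :: "(nat \<Rightarrow> 'a \<Rightarrow> int) \<Rightarrow> nat \<Rightarrow> nat \<Rightarrow> 'a \<Rightarrow> bool" where
  "abstains lam s k \<omega> = (\<forall>i\<in>{1..s}. ddig k i = 2 \<longrightarrow> lam i \<omega> = 0)"

definition r_on :: "'a pmf \<Rightarrow> ('a \<Rightarrow> int) \<Rightarrow> (nat \<Rightarrow> 'a \<Rightarrow> int) \<Rightarrow> nat \<Rightarrow> 'a set \<Rightarrow> int \<Rightarrow> nat \<Rightarrow> real" where
  "r_on p Y lam s S v k =
     measure_pmf.prob p {\<omega>\<in>S. sign_prod Y lam s k \<omega> = v \<and> abstains lam s k \<omega>}"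

lemma mu_vec_eq_mu_on: "mu_vec p Y lam s = mu_on p Y lam s UNIV"
  by (simp add: fun_eq_iff mu_vec_def mu_on_def)

lemma r_vec_eq_r_on: "r_vec p Y lam s = r_on p Y lam s UNIV 1"
  by (simp add: fun_eq_iff r_vec_def r_on_def sign_prod_def abstains_def)

lemma mu_on_block:
  assumes "j < 2 * 3 ^ s" "e < 3"
  shows "mu_on p Y lam (Suc s) S (j + 2 * 3 ^ s * e)
    = mu_on p Y lam s {\<omega>\<in>S. lam (Suc s) \<omega> = digit_vote e} j"
  unfolding mu_on_def atLeastAtMost_Suc_insert ball_insert ydig_def bdig_eq_digit_vote
  using assms by (simp add: tdig_block ddig_block_top ddig_block_low conj_ac cong: rev_conj_cong)

lemma sign_prod_block:
  assumes "k < 2 * 3 ^ s" "d < 3"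
  shows "sign_prod Y lam (Suc s) (k + 2 * 3 ^ s * d) \<omega>
    = sign_prod Y lam s k \<omega> * (if d = 1 then lam (Suc s) \<omega> else 1)"
proof -
  have "{i\<in>{1..Suc s}. ddig (k + 2 * 3 ^ s * d) i = 1} =
      (if d = 1 then insert (Suc s) {i\<in>{1..s}. ddig k i = 1} else {i\<in>{1..s}. ddig k i = 1})"
    using ddig_block_low[of _ s k d] ddig_block_top[OF assms] unfolding atLeastAtMost_Suc_insert
    by auto
  then show ?thesis unfolding sign_prod_def tdig_block by (simp add: mult_ac)
qed

lemma abstains_block:
  assumes "k < 2 * 3 ^ s" "d < 3"
  shows "abstains lam (Suc s) (k + 2 * 3 ^ s * d) \<omega>
    = (abstains lam s k \<omega> \<and> (d = 2 \<longrightarrow> lam (Suc s) \<omega> = 0))"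
  unfolding abstains_def atLeastAtMost_Suc_insert
  using assms ddig_block_low ddig_block_top by auto

lemma prob_split_event:
  "measure_pmf.prob p A = measure_pmf.prob p {\<omega>\<in>A. Q \<omega>} + measure_pmf.prob p {\<omega>\<in>A. \<not> Q \<omega>}"
proof -
  have "A = {\<omega>\<in>A. Q \<omega>} \<union> {\<omega>\<in>A. \<not> Q \<omega>}" by auto
  then show ?thesis
    using measure_pmf.finite_measure_Union[of "{\<omega>\<in>A. Q \<omega>}" p "{\<omega>\<in>A. \<not> Q \<omega>}"] by auto
qed

lemma prob_split_ternary:
  assumes "\<forall>\<omega>. l \<omega> \<in> {-1, 0, 1::int}"
  shows "measure_pmf.prob p {\<omega>\<in>S. P \<omega>} =
      measure_pmf.prob p {\<omega>\<in>{\<omega>\<in>S. l \<omega> = 1}. P \<omega>}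
    + measure_pmf.prob p {\<omega>\<in>{\<omega>\<in>S. l \<omega> = 0}. P \<omega>}
    + measure_pmf.prob p {\<omega>\<in>{\<omega>\<in>S. l \<omega> = -1}. P \<omega>}"
proof -
  let ?T = "{\<omega>\<in>S. P \<omega> \<and> l \<omega> \<noteq> 1}"
  have "{\<omega>\<in>{\<omega>\<in>S. P \<omega>}. l \<omega> = 1} = {\<omega>\<in>{\<omega>\<in>S. l \<omega> = 1}. P \<omega>}"
    and "{\<omega>\<in>{\<omega>\<in>S. P \<omega>}. l \<omega> \<noteq> 1} = ?T"
    and "{\<omega>\<in>?T. l \<omega> = 0} = {\<omega>\<in>{\<omega>\<in>S. l \<omega> = 0}. P \<omega>}"
    and "{\<omega>\<in>?T. l \<omega> \<noteq> 0} = {\<omega>\<in>{\<omega>\<in>S. l \<omega> = -1}. P \<omega>}"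
    using assms by auto
  then show ?thesis
    using prob_split_event[of p "{\<omega>\<in>S. P \<omega>}" "\<lambda>\<omega>. l \<omega> = 1"]
      prob_split_event[of p ?T "\<lambda>\<omega>. l \<omega> = 0"]
    by simp
qed

lemma prob_mult_sign:
  assumes "v = 1 \<or> v = (-1::int)"
  shows "measure_pmf.prob p {\<omega>\<in>S. q \<omega> * l \<omega> = v \<and> z \<omega>} =
      measure_pmf.prob p {\<omega>\<in>{\<omega>\<in>S. l \<omega> = 1}. q \<omega> = v \<and> z \<omega>}
    + measure_pmf.prob p {\<omega>\<in>{\<omega>\<in>S. l \<omega> = -1}. q \<omega> = -v \<and> z \<omega>}"
proof -
  have "{\<omega>\<in>{\<omega>\<in>S. q \<omega> * l \<omega> = v \<and> z \<omega>}. l \<omega> = 1} = {\<omega>\<in>{\<omega>\<in>S. l \<omega> = 1}. q \<omega> = v \<and> z \<omega>}"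
    by auto
  moreover have "{\<omega>\<in>{\<omega>\<in>S. q \<omega> * l \<omega> = v \<and> z \<omega>}. l \<omega> \<noteq> 1}
      = {\<omega>\<in>{\<omega>\<in>S. l \<omega> = -1}. q \<omega> = -v \<and> z \<omega>}"
    using assms by (auto simp: zmult_eq_1_iff zmult_eq_neg1_iff)
  ultimately show ?thesis
    using prob_split_event[of p "{\<omega>\<in>S. q \<omega> * l \<omega> = v \<and> z \<omega>}" "\<lambda>\<omega>. l \<omega> = 1"] by simp
qed

lemma r_on_block:
  assumes "k < 2 * 3 ^ s" "d < 3" "v = 1 \<or> v = -1"
    and "\<forall>\<omega>. lam (Suc s) \<omega> \<in> {-1, 0, 1}"
  shows "r_on p Y lam (Suc s) S v (k + 2 * 3 ^ s * d) =
    (\<Sum>e < 3. Dm d e * r_on p Y lam s {\<omega>\<in>S. lam (Suc s) \<omega> = digit_vote e} v k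
            + Em d e * r_on p Y lam s {\<omega>\<in>S. lam (Suc s) \<omega> = digit_vote e} (-v) k)"
proof -
  let ?q = "sign_prod Y lam s k" and ?z = "abstains lam s k" and ?l = "lam (Suc s)"
  have lhs: "r_on p Y lam (Suc s) S v (k + 2 * 3 ^ s * d) = measure_pmf.prob p
      {\<omega>\<in>S. ?q \<omega> * (if d = 1 then ?l \<omega> else 1) = v \<and> ?z \<omega> \<and> (d = 2 \<longrightarrow> ?l \<omega> = 0)}"
    unfolding r_on_def sign_prod_block[OF assms(1,2)] abstains_block[OF assms(1,2)] ..
  consider "d = 0" | "d = 1" | "d = 2" using assms(2) by linarith
  then show ?thesis
  proof cases
    case 1
    show ?thesis
      unfolding lhs unfolding 1 sum_Dm_Em_row
      using prob_split_ternary[OF assms(4), of p S "\<lambda>\<omega>. ?q \<omega> = v \<and> ?z \<omega>"]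
      by (simp add: r_on_def digit_vote_def)
  next
    case 2
    show ?thesis
      unfolding lhs unfolding 2 sum_Dm_Em_row
      using prob_mult_sign[OF assms(3), of p S ?q ?l ?z]
      by (simp add: r_on_def digit_vote_def)
  next
    case 3
    have "{\<omega>\<in>S. ?q \<omega> = v \<and> ?z \<omega> \<and> ?l \<omega> = 0} = {\<omega>\<in>{\<omega>\<in>S. ?l \<omega> = 0}. ?q \<omega> = v \<and> ?z \<omega>}"
      by auto
    then show ?thesis unfolding lhs unfolding 3 sum_Dm_Em_row by (simp add: r_on_def digit_vote_def)
  qed
qed

lemma AB_0_mult_mu_on:
  assumes "\<forall>\<omega>. Y \<omega> \<in> {-1, 1}" and "k < 2"
  shows "(\<Sum>j < 2. fst (AB 0) k j * mu_on p Y lam 0 S j) = r_on p Y lam 0 S 1 k"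
    and "(\<Sum>j < 2. snd (AB 0) k j * mu_on p Y lam 0 S j) = r_on p Y lam 0 S (-1) k"
proof -
  have "{\<omega>\<in>S. Y \<omega> \<noteq> 1} = {\<omega>\<in>S. Y \<omega> = -1}"
    using assms(1) by auto
  then have Y_split: "measure_pmf.prob p S
      = measure_pmf.prob p {\<omega>\<in>S. Y \<omega> = 1} + measure_pmf.prob p {\<omega>\<in>S. Y \<omega> = -1}"
    using prob_split_event[of p S "\<lambda>\<omega>. Y \<omega> = 1"] by simp
  have sum_2: "(\<Sum>j < 2. f j) = f 0 + f 1" for f :: "nat \<Rightarrow> real"
    by (simp add: numeral_2_eq_2)
  have "k = 0 \<or> k = 1" using assms(2) by auto
  then show "(\<Sum>j < 2. fst (AB 0) k j * mu_on p Y lam 0 S j) = r_on p Y lam 0 S 1 k"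
    and "(\<Sum>j < 2. snd (AB 0) k j * mu_on p Y lam 0 S j) = r_on p Y lam 0 S (-1) k"
    by (auto simp: sum_2 Y_split A0_def B0_def mu_on_def r_on_def sign_prod_def abstains_def
        ydig_def tdig_def)
qed

lemma AB_mult_mu_on:
  assumes "\<forall>\<omega>. Y \<omega> \<in> {-1, 1}"
    and "\<forall>i\<in>{1..s}. \<forall>\<omega>. lam i \<omega> \<in> {-1, 0, 1}"
    and "k < 2 * 3 ^ s"
  shows "(\<Sum>j < 2 * 3 ^ s. fst (AB s) k j * mu_on p Y lam s S j) = r_on p Y lam s S 1 k
       \<and> (\<Sum>j < 2 * 3 ^ s. snd (AB s) k j * mu_on p Y lam s S j) = r_on p Y lam s S (-1) k"
  using assms(2,3)
proof (induction s arbitrary: S k)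
  case 0
  then show ?case using AB_0_mult_mu_on[OF assms(1)] by simp
next
  case (Suc s)
  define n :: nat where "n = 2 * 3 ^ s"
  define k' where "k' = k mod n"
  define d where "d = k div n"
  define S\<^sub>e where "S\<^sub>e e = {\<omega>\<in>S. lam (Suc s) \<omega> = digit_vote e}" for e
  have size: "2 * 3 ^ Suc s = 3 * n" by (simp add: n_def)
  have k: "k = k' + n * d" by (simp add: k'_def d_def)
  have k': "k' < n" by (simp add: k'_def n_def)
  have d: "d < 3" using Suc.prems(2) less_mult_imp_div_less[of k 3 n] unfolding size d_def by simp
  have lam_Suc: "\<forall>\<omega>. lam (Suc s) \<omega> \<in> {-1, 0, 1}" using Suc.prems(1) by auto
  have block: "(\<Sum>j < n. fst (AB s) k' j * mu_on p Y lam (Suc s) S (j + n * e))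
        = r_on p Y lam s (S\<^sub>e e) 1 k'"
      "(\<Sum>j < n. snd (AB s) k' j * mu_on p Y lam (Suc s) S (j + n * e))
        = r_on p Y lam s (S\<^sub>e e) (-1) k'"
    if "e < 3" for e
  proof -
    have "mu_on p Y lam (Suc s) S (j + n * e) = mu_on p Y lam s (S\<^sub>e e) j" if "j < n" for j
      using mu_on_block[of j s e] \<open>e < 3\<close> that by (simp add: n_def S\<^sub>e_def mult.assoc)
    then show "(\<Sum>j < n. fst (AB s) k' j * mu_on p Y lam (Suc s) S (j + n * e))
        = r_on p Y lam s (S\<^sub>e e) 1 k'"
      and "(\<Sum>j < n. snd (AB s) k' j * mu_on p Y lam (Suc s) S (j + n * e))
        = r_on p Y lam s (S\<^sub>e e) (-1) k'"
      using Suc.IH[of k' "S\<^sub>e e"] Suc.prems(1) k' by (auto simp: n_def)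
  qed
  have r: "r_on p Y lam (Suc s) S v (k' + n * d) =
      (\<Sum>e < 3. Dm d e * r_on p Y lam s (S\<^sub>e e) v k' + Em d e * r_on p Y lam s (S\<^sub>e e) (-v) k')"
    if "v = 1 \<or> v = -1" for v
    using r_on_block[of k' s d v lam p Y S] k' d that lam_Suc by (simp add: n_def S\<^sub>e_def mult.assoc)
  show ?case
    unfolding AB_Suc_eq size n_def[symmetric]
    unfolding k kron_block_mult[OF k']
    by (auto intro!: sum.cong simp: block r[of 1] r[of "-1"] add.commute)
qed

theorem lemma2:
  fixes p :: "'a pmf" and Y :: "'a \<Rightarrow> int" and lam :: "nat \<Rightarrow> 'a \<Rightarrow> int" and s :: nat
  assumes "\<forall>\<omega>. Y \<omega> \<in> {-1, 1}"
    and "\<forall>i\<in>{1..s}. \<forall>\<omega>. lam i \<omega> \<in> {-1, 0, 1}"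
  shows "\<forall>k < 2 * 3 ^ s.
           (\<Sum>j < 2 * 3 ^ s. Amat s k j * mu_vec p Y lam s j) = r_vec p Y lam s k"
  using AB_mult_mu_on[OF assms]
  by (simp add: Amat_def mu_vec_eq_mu_on r_vec_eq_r_on)

end
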